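(* Let $p\ge2$ be an integer. (1) (With bias.) There exist $W\in\mathbb{R}^{2\times p}$, $V\in\mathbb{R}^{p\times 2}$, $b\in\mathbb{R}^2$ such that the network $s^\theta(x)=V\sin(Wx+b)$ satisfies $\mathbb{P}_{(X,Y)\sim\mathcal{D}_m}[h_\theta(X)=Y]=1$ for every integer $m\ge2$. (2) (Without bias.) Let $d=\lfloor (p-1)/2\rfloor$. There exist $W\in\mathbb{R}^{d\times p}$, $V\in\mathbb{R}^{p\times d}$ such that the network $s^\theta(x)=V\sin(Wx)$ satisfies, for every integer $m\ge 2$: if $p$ is odd then $\mathbb{P}_{(X,Y)\sim\mathcal{D}_m}[h_\theta(X)=Y]\ge 1-\frac1p$, and if $p$ is even then $\mathbb{P}_{(X,Y)\sim\mathcal{D}_m}[h_\theta(X)=Y]\ge 1-\frac2p$.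
   Context: Let $[p]=\{0,1,\dots,p-1\}$ and let $e_r$ ($r\in[p]$) be the standard basis vectors of $\mathbb{R}^p$. For an integer $m\ge1$, let $\mathcal{X}_m=\{x\in\{0,1,\dots,m\}^p:\ \|x\|_1=m\}$. The distribution $\mathcal{D}_m$ on $\mathcal{X}_m\times[p]$ is that of $(X,Y)$ where $s_1,\dots,s_m$ are i.i.d. uniform on $[p]$, $X=\sum_{i=1}^m e_{s_i}$ and $Y=(\sum_{i=1}^m s_i)\bmod p$. The function $\sin$ is applied entrywise. For a score vector $s^\theta(x)\in\mathbb{R}^p$ with coordinates indexed by $[p]$, the predictor is $h_\theta(x)=\ell$ if $s^\theta_\ell(x)>s^\theta_k(x)$ for all $k\ne\ell$, and $h_\theta(x)=\bot$ (an invalid prediction, never equal to any label) otherwise. *)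

theory Defs
  imports Complex_Main
begin

text \<open>Vectors in R^p are functions nat => real, indexed by [p] = {0..<p};
  a matrix A in R^(a x b) is a function nat => nat => real, entry A i j with i<a, j<b.\<close>

definition score :: "nat \<Rightarrow> nat \<Rightarrow> (nat \<Rightarrow> nat \<Rightarrow> real) \<Rightarrow> (nat \<Rightarrow> nat \<Rightarrow> real)
    \<Rightarrow> (nat \<Rightarrow> real) \<Rightarrow> (nat \<Rightarrow> real) \<Rightarrow> nat \<Rightarrow> real" where
  "score p d W V b x l = (\<Sum>j<d. V l j * sin ((\<Sum>r<p. W j r * x r) + b j))"

definition predictor :: "nat \<Rightarrow> ((nat \<Rightarrow> real) \<Rightarrow> nat \<Rightarrow> real) \<Rightarrow> (nat \<Rightarrow> real) \<Rightarrow> nat option" where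
  "predictor p s x =
     (if \<exists>l<p. \<forall>k<p. k \<noteq> l \<longrightarrow> s x l > s x k
      then Some (THE l. l < p \<and> (\<forall>k<p. k \<noteq> l \<longrightarrow> s x l > s x k)) else None)"

text \<open>Input X = sum of e_{s_i} for the sample sequence ss = [s_1,...,s_m].\<close>
definition Xvec :: "nat list \<Rightarrow> nat \<Rightarrow> real" where
  "Xvec ss r = real (length (filter (\<lambda>i. i = r) ss))"

definition Ylab :: "nat \<Rightarrow> nat list \<Rightarrow> nat" where
  "Ylab p ss = sum_list ss mod p"

text \<open>Sequences (s_1,...,s_m) in [p]^m; under D_m they are uniformly distributed.\<close>
definition samples :: "nat \<Rightarrow> nat \<Rightarrow> nat list set" where
  "samples p m = {ss. length ss = m \<and> set ss \<subseteq> {0..<p}}"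

text \<open>P_{(X,Y)~D_m}[h(X) = Y] for a predictor h (uniform i.i.d. s_i, so counting).\<close>
definition accuracy :: "nat \<Rightarrow> nat \<Rightarrow> ((nat \<Rightarrow> real) \<Rightarrow> nat option) \<Rightarrow> real" where
  "accuracy p m h =
     real (card {ss \<in> samples p m. h (Xvec ss) = Some (Ylab p ss)}) / real p ^ m"

end

theory Submission
  imports Defs
begin

(* Let t = (s_1 + ... + s_m) mod p and theta = 2 pi / p. A first layer with weights
   W_j r = c_j r sees the input only through the angles c_j (s_1 + ... + s_m), and when c_j is
   an integer multiple of theta their sines depend only on t.

   With bias (0, pi/2) the two hidden units are sin (theta t) and cos (theta t), and the rows
   V_l = (sin (theta l), cos (theta l)) make the score cos (theta (t - l)), uniquely maximal at
   l = t.

   Without bias, the hidden units are sin (k theta t) for k = 1..d and V_l = (sin (k theta l))_k,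
   so the score is sum_k sin (k theta l) sin (k theta t). By the product-to-sum formula this is
   half the difference of two Dirichlet sums sum_k cos (k theta j), which equal d when p divides j
   and -1/2, -1 or 0 (depending on the parities of p and j) otherwise. Hence the score is p/4 at
   l = t and at most 0 elsewhere, unless all sin (k theta t) vanish, i.e. t = 0 or 2 t = p. Each
   residue class of t has probability at most 1/p. *)

lemma sin_add_2pi_int: "sin (x + 2 * pi * of_int n) = sin x"
  by (simp add: sin_add)

lemma cos_add_2pi_int: "cos (x + 2 * pi * of_int n) = cos x"
  by (simp add: cos_add)

lemma
  fixes k :: nat
  assumes "p > 0"
  shows sin_2pi_mult_mod:
      "sin (2 * pi * real k * real (n mod p) / real p) = sin (2 * pi * real k * real n / real p)"
    and cos_2pi_mult_mod:
      "cos (2 * pi * real k * real (n mod p) / real p) = cos (2 * pi * real k * real n / real p)"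
proof -
  have "real n = real (n mod p) + real p * real (n div p)"
    by (metis of_nat_add of_nat_mult mod_mult_div_eq)
  then have "2 * pi * real k * real n / real p
      = 2 * pi * real k * real (n mod p) / real p + 2 * pi * of_int (int (k * (n div p)))"
    using assms by (simp add: field_simps)
  then show "sin (2 * pi * real k * real (n mod p) / real p) = sin (2 * pi * real k * real n / real p)"
    and "cos (2 * pi * real k * real (n mod p) / real p) = cos (2 * pi * real k * real n / real p)"
    by (simp_all only: sin_add_2pi_int cos_add_2pi_int)
qed

lemma dvd_diff_imp_eq:
  assumes "l < p" "t < p" "int p dvd (int l - int t)"
  shows "l = t"
proof -
  have "int l mod int p = int t mod int p"
    using assms(3) by (simp add: mod_eq_dvd_iff)
  with assms(1,2) show ?thesis by simp
qed

lemma sin_pi_div_neq_0: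
  assumes "p > 0" "\<not> int p dvd j"
  shows "sin (pi * of_int j / real p) \<noteq> 0"
proof
  assume "sin (pi * of_int j / real p) = 0"
  then obtain i :: int where "pi * of_int j / real p = of_int i * pi"
    by (auto simp: sin_zero_iff_int2)
  with \<open>p > 0\<close> have "of_int j = real p * of_int i" by (simp add: field_simps)
  then have "j = int p * i" by (metis of_int_eq_iff of_int_mult of_int_of_nat_eq)
  then show False using assms by simp
qed

lemma cos_2pi_div_lt_1:
  assumes "p > 0" "\<not> int p dvd j"
  shows "cos (2 * pi * of_int j / real p) < 1"
proof -
  have "cos (2 * pi * of_int j / real p) = 1 - 2 * sin (pi * of_int j / real p) ^ 2"
    using cos_double_sin[of "pi * of_int j / real p"] by (simp add: mult.assoc)
  then show ?thesis using sin_pi_div_neq_0[OF assms] by simp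
qed

lemma sin_half_times_sum_cos:
  "2 * sin (x / 2) * (\<Sum>k<d. cos (real (Suc k) * x)) = sin ((real d + 1 / 2) * x) - sin (x / 2)"
proof (induction d)
  case 0
  show ?case by simp
next
  case (Suc d)
  have "sin ((real (Suc d) + 1 / 2) * x) - sin ((real d + 1 / 2) * x)
      = 2 * sin (x / 2) * cos (real (Suc d) * x)"
    by (simp add: sin_diff_sin algebra_simps add_divide_distrib)
  with Suc show ?case by (simp add: algebra_simps)
qed

lemma real_pred_div_2:
  assumes "p > 0"
  shows "real ((p - 1) div 2) = (if odd p then real p - 1 else real p - 2) / 2"
proof (cases "odd p")
  case True
  then obtain q where "p = 2 * q + 1" by (elim oddE)
  then show ?thesis by simp
next
  case False
  then obtain q where q: "p = 2 * q" by auto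
  with assms have "q > 0" "(p - 1) div 2 = q - 1" by presburger+
  with q show ?thesis by (simp add: of_nat_diff)
qed

definition cos_sum :: "nat \<Rightarrow> int \<Rightarrow> real" where
  "cos_sum p j = (\<Sum>k<(p - 1) div 2. cos (2 * pi * real (Suc k) * of_int j / real p))"

lemma cos_sum_dvd:
  assumes "p > 0" "int p dvd j"
  shows "cos_sum p j = real ((p - 1) div 2)"
proof -
  obtain i where "j = int p * i" using assms(2) by (elim dvdE)
  have "cos (2 * pi * real (Suc k) * of_int j / real p) = 1" for k
  proof -
    have "2 * pi * real (Suc k) * of_int j / real p = 2 * pi * of_int (int (Suc k) * i)"
      using assms(1) \<open>j = int p * i\<close> by simp
    then show ?thesis by (metis cos_int_2pin)
  qed
  then show ?thesis by (simp add: cos_sum_def)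
qed

lemma cos_sum_not_dvd:
  assumes "p > 0" "\<not> int p dvd j"
  shows "cos_sum p j = (if odd p then - 1 / 2 else if even j then - 1 else 0)"
proof -
  define x where "x = 2 * pi * of_int j / real p"
  define d where "d = (p - 1) div 2"
  have d: "real d = (if odd p then real p - 1 else real p - 2) / 2"
    unfolding d_def by (rule real_pred_div_2[OF assms(1)])
  have sin_half_x: "sin (x / 2) \<noteq> 0"
    using sin_pi_div_neq_0[OF assms] by (simp add: x_def)
  have "sin ((real d + 1 / 2) * x) = (if odd p then 0 else - cos (pi * of_int j)) * sin (x / 2)"
  proof (cases "odd p")
    case True
    with assms(1) have "(real d + 1 / 2) * x = pi * of_int j"
      by (simp add: d x_def field_simps)
    with True show ?thesis by simp
  next
    case False
    with assms(1) have "(real d + 1 / 2) * x = pi * of_int j - x / 2"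
      by (simp add: d x_def field_simps)
    with False show ?thesis by (simp add: sin_diff)
  qed
  with sin_half_times_sum_cos[of x d]
  have "2 * sin (x / 2) * (\<Sum>k<d. cos (real (Suc k) * x))
      = 2 * sin (x / 2) * (((if odd p then 0 else - cos (pi * of_int j)) - 1) / 2)"
    by (simp add: algebra_simps)
  with sin_half_x
  have "(\<Sum>k<d. cos (real (Suc k) * x)) = ((if odd p then 0 else - cos (pi * of_int j)) - 1) / 2"
    by simp
  moreover have "cos_sum p j = (\<Sum>k<d. cos (real (Suc k) * x))"
    by (simp add: cos_sum_def d_def x_def mult_ac)
  ultimately show ?thesis by (auto simp: cos_npi_int)
qed

definition sin_kernel :: "nat \<Rightarrow> nat \<Rightarrow> nat \<Rightarrow> real" where
  "sin_kernel p l t = (\<Sum>k<(p - 1) div 2.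
     sin (2 * pi * real (Suc k) * real l / real p) * sin (2 * pi * real (Suc k) * real t / real p))"

lemma sin_kernel_eq_cos_sum:
  assumes "p > 0"
  shows "2 * sin_kernel p l t = cos_sum p (int l - int t) - cos_sum p (int l + int t)"
proof -
  have "2 * (sin (2 * pi * real (Suc k) * real l / real p)
          * sin (2 * pi * real (Suc k) * real t / real p))
      = cos (2 * pi * real (Suc k) * of_int (int l - int t) / real p)
        - cos (2 * pi * real (Suc k) * of_int (int l + int t) / real p)" for k
    by (simp add: sin_times_sin diff_divide_distrib add_divide_distrib algebra_simps)
  then show ?thesis
    by (simp add: sin_kernel_def cos_sum_def sum_distrib_left sum_subtractf)
qed

lemma sin_kernel_diag:
  assumes "t < p" "t \<noteq> 0" "2 * t \<noteq> p"
  shows "sin_kernel p t t = real p / 4"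
proof -
  have "p > 0" using assms(1) by simp
  have "\<not> p dvd 2 * t"
  proof
    assume "p dvd 2 * t"
    then obtain q where q: "2 * t = p * q" by (elim dvdE)
    with assms(1) have "q < 2" by (metis mult_less_cancel1 mult.commute mult_2 add_less_mono)
    moreover from q assms(2) have "q \<noteq> 0" by (cases q) auto
    ultimately have "q = 1" by simp
    with q assms(3) show False by simp
  qed
  then have "\<not> int p dvd (int t + int t)"
    by (metis mult_2 of_nat_add of_nat_dvd_iff)
  then have "2 * sin_kernel p t t = real ((p - 1) div 2) + (if odd p then 1 / 2 else 1)"
    using sin_kernel_eq_cos_sum[OF \<open>p > 0\<close>, of t t] cos_sum_dvd[OF \<open>p > 0\<close>, of 0]
      cos_sum_not_dvd[OF \<open>p > 0\<close>] by simp
  also have "\<dots> = real p / 2"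
    using real_pred_div_2[OF \<open>p > 0\<close>] by simp
  finally show ?thesis by simp
qed

lemma sin_kernel_off_diag_nonpos:
  assumes "l < p" "t < p" "l \<noteq> t"
  shows "sin_kernel p l t \<le> 0"
proof -
  have "p > 0" using assms(1) by simp
  have not_dvd: "\<not> int p dvd (int l - int t)"
    using dvd_diff_imp_eq assms by blast
  have "2 * sin_kernel p l t \<le> 0"
  proof (cases "int p dvd (int l + int t)")
    case True
    then show ?thesis
      using sin_kernel_eq_cos_sum[OF \<open>p > 0\<close>] cos_sum_dvd[OF \<open>p > 0\<close>]
        cos_sum_not_dvd[OF \<open>p > 0\<close> not_dvd] by simp
  next
    case False
    \<comment> \<open>then both Dirichlet sums take the same value and cancel\<close>
    have "even (int l - int t) \<longleftrightarrow> even (int l + int t)" by simp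
    then show ?thesis
      using sin_kernel_eq_cos_sum[OF \<open>p > 0\<close>] cos_sum_not_dvd[OF \<open>p > 0\<close> False]
        cos_sum_not_dvd[OF \<open>p > 0\<close> not_dvd] by simp
  qed
  then show ?thesis by simp
qed

lemma Xvec_Cons: "Xvec (a # ss) r = Xvec ss r + (if r = a then 1 else 0)"
  by (simp add: Xvec_def)

lemma sum_Xvec_eq_sum_list:
  assumes "set ss \<subseteq> {0..<p}"
  shows "(\<Sum>r<p. f r * Xvec ss r) = (\<Sum>s\<leftarrow>ss. f s)"
  using assms
proof (induction ss)
  case Nil
  show ?case by (simp add: Xvec_def)
next
  case (Cons a ss)
  then have "a < p" by simp
  have "(\<Sum>r<p. f r * Xvec (a # ss) r)
      = (\<Sum>r<p. f r * Xvec ss r + (if r = a then f r else 0))"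
    by (intro sum.cong) (simp_all add: Xvec_Cons distrib_left)
  also have "\<dots> = (\<Sum>r<p. f r * Xvec ss r) + f a"
    using \<open>a < p\<close> by (simp add: sum.distrib)
  finally show ?case using Cons by simp
qed

lemma sum_Xvec_linear:
  assumes "set ss \<subseteq> {0..<p}"
  shows "(\<Sum>r<p. c * real r * Xvec ss r) = c * real (sum_list ss)"
  using sum_Xvec_eq_sum_list[OF assms, of "\<lambda>r. c * real r"]
  by (simp add: sum_list_const_mult sum_list_of_nat)

lemma predictor_eqI:
  assumes "l < p" "\<And>k. k < p \<Longrightarrow> k \<noteq> l \<Longrightarrow> s x k < s x l"
  shows "predictor p s x = Some l"
proof -
  have "(THE l. l < p \<and> (\<forall>k<p. k \<noteq> l \<longrightarrow> s x l > s x k)) = l"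
    using assms by (intro the_equality) (auto, metis less_asym)
  with assms show ?thesis by (auto simp: predictor_def)
qed

lemma finite_samples: "finite (samples p m)"
  using finite_lists_length_eq[of "{0..<p}" m] by (simp add: samples_def conj_commute)

lemma card_samples: "card (samples p m) = p ^ m"
  using card_lists_length_eq[of "{0..<p}" m] by (simp add: samples_def conj_commute)

lemma card_samples_Ylab_le:
  assumes "m \<ge> 1" "p > 0"
  shows "card {ss \<in> samples p m. Ylab p ss = c} \<le> p ^ (m - 1)"
proof -
  define head where "head t = nat ((int c - int (sum_list t)) mod int p)" for t
  have "{ss \<in> samples p m. Ylab p ss = c} \<subseteq> (\<lambda>t. head t # t) ` samples p (m - 1)"
  proof
    fix ss assume "ss \<in> {ss \<in> samples p m. Ylab p ss = c}"
    then have ss: "length ss = m" "set ss \<subseteq> {0..<p}" "sum_list ss mod p = c"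
      by (auto simp: samples_def Ylab_def)
    with assms(1) obtain x t where xt: "ss = x # t" by (cases ss) auto
    with ss have "x < p" "t \<in> samples p (m - 1)" by (auto simp: samples_def)
    from ss xt have "int (x + sum_list t) mod int p = int c"
      by (metis of_nat_mod sum_list.Cons)
    then have "(int c - int (sum_list t)) mod int p = int x mod int p"
      by (metis add_diff_cancel_right' mod_diff_left_eq of_nat_add)
    with \<open>x < p\<close> have "head t = x" by (simp add: head_def)
    with xt \<open>t \<in> samples p (m - 1)\<close> show "ss \<in> (\<lambda>t. head t # t) ` samples p (m - 1)"
      by blast
  qed
  then have "card {ss \<in> samples p m. Ylab p ss = c}
      \<le> card ((\<lambda>t. head t # t) ` samples p (m - 1))"
    by (intro card_mono finite_imageI finite_samples)
  also have "\<dots> \<le> p ^ (m - 1)"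
    using card_image_le[OF finite_samples] by (metis card_samples)
  finally show ?thesis .
qed

lemma card_samples_Ylab_mem_le:
  assumes "m \<ge> 1" "p > 0" "finite E"
  shows "card {ss \<in> samples p m. Ylab p ss \<in> E} \<le> card E * p ^ (m - 1)"
proof -
  have "{ss \<in> samples p m. Ylab p ss \<in> E} = (\<Union>c\<in>E. {ss \<in> samples p m. Ylab p ss = c})"
    by blast
  also have "card \<dots> \<le> (\<Sum>c\<in>E. card {ss \<in> samples p m. Ylab p ss = c})"
    by (rule card_UN_le[OF \<open>finite E\<close>])
  also have "\<dots> \<le> card E * p ^ (m - 1)"
    using sum_bounded_above[of E _ "p ^ (m - 1)"] card_samples_Ylab_le[OF assms(1,2)] by simp
  finally show ?thesis .
qed

lemma accuracy_eq_1:
  assumes "p > 0" "\<And>ss. ss \<in> samples p m \<Longrightarrow> h (Xvec ss) = Some (Ylab p ss)"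
  shows "accuracy p m h = 1"
proof -
  have "{ss \<in> samples p m. h (Xvec ss) = Some (Ylab p ss)} = samples p m"
    using assms(2) by blast
  with assms(1) show ?thesis by (simp add: accuracy_def card_samples)
qed

lemma accuracy_ge:
  assumes "p > 0" "m \<ge> 1" "finite E"
    and correct: "\<And>ss. ss \<in> samples p m \<Longrightarrow> Ylab p ss \<notin> E \<Longrightarrow> h (Xvec ss) = Some (Ylab p ss)"
  shows "1 - real (card E) / real p \<le> accuracy p m h"
proof -
  define G where "G = {ss \<in> samples p m. h (Xvec ss) = Some (Ylab p ss)}"
  have "samples p m - G \<subseteq> {ss \<in> samples p m. Ylab p ss \<in> E}"
    using correct by (auto simp: G_def)
  then have "card (samples p m - G) \<le> card {ss \<in> samples p m. Ylab p ss \<in> E}"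
    by (intro card_mono) (simp_all add: finite_samples)
  also have "\<dots> \<le> card E * p ^ (m - 1)"
    by (rule card_samples_Ylab_mem_le[OF assms(2,1,3)])
  finally have "p ^ m \<le> card G + card E * p ^ (m - 1)"
    using card_Diff_subset[of G "samples p m"] finite_samples[of p m] card_samples[of p m]
    by (auto simp: G_def)
  then have "real p ^ m \<le> real (card G) + real (card E) * real p ^ (m - 1)"
    by (metis of_nat_add of_nat_le_iff of_nat_mult of_nat_power)
  moreover have p_pow: "real p ^ m = real p * real p ^ (m - 1)"
    using assms(2) by (cases m) auto
  ultimately have bound:
      "real p * real p ^ (m - 1) \<le> real (card G) + real (card E) * real p ^ (m - 1)"
    by simp
  have q_pos: "real p ^ (m - 1) > 0"
    using assms(1) by simp
  have "1 - real (card E) / real p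
      = (real p * real p ^ (m - 1) - real (card E) * real p ^ (m - 1))
        / (real p * real p ^ (m - 1))"
    using assms(1) q_pos by (simp add: field_simps)
  also have "\<dots> \<le> real (card G) / (real p * real p ^ (m - 1))"
    using bound assms(1) q_pos by (intro divide_right_mono) simp_all
  also have "\<dots> = accuracy p m h"
    by (simp add: accuracy_def G_def p_pow)
  finally show ?thesis .
qed

definition W_cos :: "nat \<Rightarrow> nat \<Rightarrow> nat \<Rightarrow> real" where
  "W_cos p j r = 2 * pi / real p * real r"

definition V_cos :: "nat \<Rightarrow> nat \<Rightarrow> nat \<Rightarrow> real" where
  "V_cos p l j = (if j = 0 then sin (2 * pi * real l / real p) else cos (2 * pi * real l / real p))"

definition b_cos :: "nat \<Rightarrow> real" where
  "b_cos j = (if j = 0 then 0 else pi / 2)"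

lemma score_cos_network:
  assumes "p > 0" "ss \<in> samples p m"
  shows "score p 2 (W_cos p) (V_cos p) b_cos (Xvec ss) l
    = cos (2 * pi * of_int (int (Ylab p ss) - int l) / real p)"
proof -
  define S where "S = sum_list ss"
  have "(\<Sum>r<p. W_cos p j r * Xvec ss r) = 2 * pi / real p * real S" for j
    using sum_Xvec_linear[of ss p "2 * pi / real p"] assms(2)
    by (simp add: W_cos_def S_def samples_def)
  then have "score p 2 (W_cos p) (V_cos p) b_cos (Xvec ss) l
      = cos (2 * pi * real S / real p - 2 * pi * real l / real p)"
    by (simp add: score_def numeral_2_eq_2 V_cos_def b_cos_def sin_add cos_diff algebra_simps)
  also have "\<dots> = cos (2 * pi * real (S mod p) / real p - 2 * pi * real l / real p)"
    using sin_2pi_mult_mod[OF assms(1), of 1 S] cos_2pi_mult_mod[OF assms(1), of 1 S]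
    by (simp add: cos_diff)
  finally show ?thesis
    by (simp add: Ylab_def S_def diff_divide_distrib algebra_simps)
qed

lemma predictor_cos_network:
  assumes "p > 0" "ss \<in> samples p m"
  shows "predictor p (score p 2 (W_cos p) (V_cos p) b_cos) (Xvec ss) = Some (Ylab p ss)"
proof (rule predictor_eqI)
  show "Ylab p ss < p" using assms(1) by (simp add: Ylab_def)
  fix k assume "k < p" "k \<noteq> Ylab p ss"
  with \<open>Ylab p ss < p\<close> have not_dvd: "\<not> int p dvd (int (Ylab p ss) - int k)"
    using dvd_diff_imp_eq by blast
  show "score p 2 (W_cos p) (V_cos p) b_cos (Xvec ss) k
      < score p 2 (W_cos p) (V_cos p) b_cos (Xvec ss) (Ylab p ss)"
    unfolding score_cos_network[OF assms] using cos_2pi_div_lt_1[OF assms(1) not_dvd] by simp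
qed

definition W_sin :: "nat \<Rightarrow> nat \<Rightarrow> nat \<Rightarrow> real" where
  "W_sin p j r = 2 * pi * real (Suc j) / real p * real r"

definition V_sin :: "nat \<Rightarrow> nat \<Rightarrow> nat \<Rightarrow> real" where
  "V_sin p l j = sin (2 * pi * real (Suc j) * real l / real p)"

lemma score_sin_network:
  assumes "p > 0" "ss \<in> samples p m"
  shows "score p ((p - 1) div 2) (W_sin p) (V_sin p) (\<lambda>_. 0) (Xvec ss) l
    = sin_kernel p l (Ylab p ss)"
proof -
  have linear:
      "(\<Sum>r<p. W_sin p j r * Xvec ss r) = 2 * pi * real (Suc j) * real (sum_list ss) / real p" for j
    using sum_Xvec_linear[of ss p "2 * pi * real (Suc j) / real p"] assms(2)
    by (simp add: W_sin_def samples_def)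
  have periodic: "sin (2 * pi * real (Suc j) * real (sum_list ss) / real p)
      = sin (2 * pi * real (Suc j) * real (Ylab p ss) / real p)" for j
    unfolding Ylab_def by (rule sin_2pi_mult_mod[OF assms(1), symmetric])
  show ?thesis
    unfolding score_def sin_kernel_def
    by (intro sum.cong refl) (simp only: linear periodic V_sin_def add_0_right)
qed

lemma predictor_sin_network:
  assumes "p > 0" "ss \<in> samples p m" "Ylab p ss \<noteq> 0" "2 * Ylab p ss \<noteq> p"
  shows "predictor p (score p ((p - 1) div 2) (W_sin p) (V_sin p) (\<lambda>_. 0)) (Xvec ss)
    = Some (Ylab p ss)"
proof (rule predictor_eqI)
  show "Ylab p ss < p" using assms(1) by (simp add: Ylab_def)
  fix k assume "k < p" "k \<noteq> Ylab p ss"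
  then show "score p ((p - 1) div 2) (W_sin p) (V_sin p) (\<lambda>_. 0) (Xvec ss) k
      < score p ((p - 1) div 2) (W_sin p) (V_sin p) (\<lambda>_. 0) (Xvec ss) (Ylab p ss)"
    unfolding score_sin_network[OF assms(1,2)]
    using sin_kernel_off_diag_nonpos[of k p "Ylab p ss"] sin_kernel_diag[of "Ylab p ss" p]
      \<open>Ylab p ss < p\<close> assms by simp
qed

lemma accuracy_sin_network:
  assumes "p \<ge> 2" "m \<ge> 1"
  shows "1 - (if odd p then 1 else 2) / real p
    \<le> accuracy p m (predictor p (score p ((p - 1) div 2) (W_sin p) (V_sin p) (\<lambda>_. 0)))"
proof -
  define E where "E = {t. t = 0 \<or> 2 * t = p}"
  have E: "E = (if odd p then {0} else {0, p div 2})"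
    by (auto simp: E_def)
  with assms(1) have "finite E" and card_E: "card E = (if odd p then 1 else 2)"
    by auto
  have "1 - real (card E) / real p
      \<le> accuracy p m (predictor p (score p ((p - 1) div 2) (W_sin p) (V_sin p) (\<lambda>_. 0)))"
  proof (rule accuracy_ge[OF _ assms(2) \<open>finite E\<close>])
    show "p > 0" using assms(1) by simp
    fix ss assume "ss \<in> samples p m" "Ylab p ss \<notin> E"
    with \<open>p > 0\<close> show "predictor p (score p ((p - 1) div 2) (W_sin p) (V_sin p) (\<lambda>_. 0)) (Xvec ss)
        = Some (Ylab p ss)"
      by (intro predictor_sin_network) (auto simp: E_def)
  qed
  with card_E show ?thesis by (cases "odd p") simp_all
qed

theorem mainTheorem2:
  fixes p :: nat
  assumes "p \<ge> 2"
  shows "(\<exists>(W :: nat \<Rightarrow> nat \<Rightarrow> real) (V :: nat \<Rightarrow> nat \<Rightarrow> real) (b :: nat \<Rightarrow> real).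
            \<forall>m::nat. m \<ge> 2 \<longrightarrow> accuracy p m (predictor p (score p 2 W V b)) = 1)
       \<and> (\<exists>(W :: nat \<Rightarrow> nat \<Rightarrow> real) (V :: nat \<Rightarrow> nat \<Rightarrow> real).
            \<forall>m::nat. m \<ge> 2 \<longrightarrow>
              (odd p \<longrightarrow> accuracy p m (predictor p (score p ((p - 1) div 2) W V (\<lambda>_. 0)))
                           \<ge> 1 - 1 / real p) \<and>
              (even p \<longrightarrow> accuracy p m (predictor p (score p ((p - 1) div 2) W V (\<lambda>_. 0)))
                           \<ge> 1 - 2 / real p))"
proof (intro conjI exI allI impI)
  have "p > 0" using assms by simp
  show "accuracy p m (predictor p (score p 2 (W_cos p) (V_cos p) b_cos)) = 1" for m
    using accuracy_eq_1 predictor_cos_network \<open>p > 0\<close> by blast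
  let ?h = "predictor p (score p ((p - 1) div 2) (W_sin p) (V_sin p) (\<lambda>_. 0))"
  fix m :: nat assume "m \<ge> 2"
  then have "1 - (if odd p then 1 else 2) / real p \<le> accuracy p m ?h"
    using accuracy_sin_network assms by simp
  then show "odd p \<Longrightarrow> 1 - 1 / real p \<le> accuracy p m ?h"
    and "even p \<Longrightarrow> 1 - 2 / real p \<le> accuracy p m ?h"
    by simp_all
qed

end
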